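(* Let $f\in R(A_2)$, $g\in R(A_1^* )$, $k\in K_2$, let $x\in D_2=D(A_2)\cap D(A_1^* )$ be the unique solution of $A_2x=f$, $A_1^*x=g$, $\pi_2x=k$, let $\tilde x\in H_2$, and set $e:=x-\tilde x$, $e_{A_1}:=\pi_{A_1}e$, $e_{A_2^*}:=\pi_{A_2^*}e$, $e_{K_2}:=\pi_2e$. Then: (i) $e=e_{A_1}+e_{K_2}+e_{A_2^*}\in R(A_1)\oplus K_2\oplus R(A_2^* )$ and $\|e\|^2_{H_2}=\|e_{A_1}\|^2_{H_2}+\|e_{K_2}\|^2_{H_2}+\|e_{A_2^*}\|^2_{H_2}$; (ii) $\|e_{A_1}\|^2_{H_2}=\max_{\varphi\in D(A_1)}\big(2\langle g,\varphi\rangle_{H_1}-\langle2\tilde x+A_1\varphi,A_1\varphi\rangle_{H_2}\big)$, the maximum being attained e.g. at $\hat\varphi:=(\mathcal{A}_1)^{-1}e_{A_1}\in D(\mathcal{A}_1)$; (iii) $\|e_{A_2^*}\|^2_{H_2}=\max_{\phi\in D(A_2^* )}\big(2\langle f,\phi\rangle_{H_3}-\langle2\tilde x+A_2^*\phi,A_2^*\phi\rangle_{H_2}\big)$, the maximum being attained e.g. at $\hat\phi:=(\mathcal{A}_2^* )^{-1}e_{A_2^*}\in D(\mathcal{A}_2^* )$; (iv) $\|e_{K_2}\|^2_{H_2}=\max_{\theta\in K_2}\langle2(k-\tilde x)-\theta,\theta\rangle_{H_2}$, the maximum being attained at $\hat\theta:=e_{K_2}$. If $\tilde x=k+\tilde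 x_\perp$ with some $\tilde x_\perp\in K_2^\perp$, then $e_{K_2}=0$, and in (ii) and (iii) $\tilde x$ can be replaced by $\tilde x_\perp$.
   Context: Let $H_0,\dots,H_4$ be Hilbert spaces and, for $\ell=0,\dots,3$, $A_\ell:D(A_\ell)\subset H_\ell\to H_{\ell+1}$ densely defined closed linear operators with Hilbert space adjoints $A_\ell^*$, satisfying $R(A_\ell)\subset N(A_{\ell+1})$ for $\ell=0,1,2$. Standing assumption: $R(A_1)$ and $R(A_2)$ are closed and $K_2$ is finite dimensional. $K_2:=N(A_2)\cap N(A_1^* )$, $\pi_2:H_2\to K_2$ orthogonal projector; $\pi_{A_1}$, $\pi_{A_2^*}$ orthogonal projectors of $H_2$ onto $R(A_1)$, $R(A_2^* )$. Reduced operators $\mathcal{A}_1:=A_1|_{D(A_1)\cap R(A_1^* )}$ and $\mathcal{A}_2^*:=A_2^*|_{D(A_2^* )\cap R(A_2)}$ (injective, with ranges $R(A_1)$ and $R(A_2^* )$). *)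

theory Defs
  imports "HOL-Analysis.Analysis"
begin

text \<open>Real Hilbert spaces are types of class real_inner + complete_space.
An (unbounded) linear operator A : D(A) \<subseteq> H \<rightarrow> H' is represented by a pair
(D, A) of its domain D and a function A (values outside D irrelevant).\<close>

definition lin_op :: "'a::real_vector set \<Rightarrow> ('a \<Rightarrow> 'b::real_vector) \<Rightarrow> bool" where
  "lin_op D A \<longleftrightarrow> subspace D \<and>
     (\<forall>x\<in>D. \<forall>y\<in>D. A (x + y) = A x + A y) \<and> (\<forall>c. \<forall>x\<in>D. A (c *\<^sub>R x) = c *\<^sub>R A x)"

definition densely_defined :: "'a::real_normed_vector set \<Rightarrow> bool" where
  "densely_defined D \<longleftrightarrow> closure D = UNIV"

definition closed_op :: "'a::topological_space set \<Rightarrow> ('a \<Rightarrow> 'b::topological_space) \<Rightarrow> bool" where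
  "closed_op D A \<longleftrightarrow> closed {(x, A x) | x. x \<in> D}"

definition dd_closed_op :: "'a::real_normed_vector set \<Rightarrow> ('a \<Rightarrow> 'b::real_normed_vector) \<Rightarrow> bool" where
  "dd_closed_op D A \<longleftrightarrow> lin_op D A \<and> densely_defined D \<and> closed_op D A"

definition adj_dom :: "'a::real_inner set \<Rightarrow> ('a \<Rightarrow> 'b::real_inner) \<Rightarrow> 'b set" where
  "adj_dom D A = {y. \<exists>z. \<forall>x\<in>D. inner (A x) y = inner x z}"

definition adj :: "'a::real_inner set \<Rightarrow> ('a \<Rightarrow> 'b::real_inner) \<Rightarrow> 'b \<Rightarrow> 'a" where
  "adj D A y = (THE z. \<forall>x\<in>D. inner (A x) y = inner x z)"

definition ran :: "'a set \<Rightarrow> ('a \<Rightarrow> 'b) \<Rightarrow> 'b set" where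
  "ran D A = A ` D"

definition ker :: "'a set \<Rightarrow> ('a \<Rightarrow> 'b::zero) \<Rightarrow> 'a set" where
  "ker D A = {x \<in> D. A x = 0}"

definition orth_proj :: "'a::real_inner set \<Rightarrow> 'a \<Rightarrow> 'a" where
  "orth_proj S x = (THE y. y \<in> S \<and> (\<forall>s\<in>S. inner (x - y) s = 0))"

definition orth_compl :: "'a::real_inner set \<Rightarrow> 'a set" where
  "orth_compl S = {x. \<forall>s\<in>S. inner x s = 0}"

definition fin_dim :: "'a::real_vector set \<Rightarrow> bool" where
  "fin_dim S \<longleftrightarrow> (\<exists>B. finite B \<and> S = span B)"

text \<open>Inverse of the reduced operator A|_{D \<inter> S} (S = R(A^*)).\<close>
definition red_inv :: "'a set \<Rightarrow> ('a \<Rightarrow> 'b) \<Rightarrow> 'a set \<Rightarrow> 'b \<Rightarrow> 'a" where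
  "red_inv D A S y = (THE u. u \<in> D \<inter> S \<and> A u = y)"

end

theory Submission
  imports Defs
begin

(*
  Since R(A1) lies in N(A2), and the closed range theorem identifies N(A1^* ) with the orthogonal
  complement of R(A1) and R(A2^* ) with that of N(A2), the space H2 splits orthogonally into R(A1),
  K2 (the part of N(A2) orthogonal to R(A1)) and R(A2^* ); this is (i).  Each of (ii)-(iv) is the
  dual description  |P e|^2 = max over a in S of (2 <a, e> - |a|^2)  of the orthogonal projection P
  onto a closed subspace S, attained at a = P e.  The data make this functional computable without
  knowing x: for a = A1 phi one has <a, x> = <g, phi>, for a = A2^* phi one has <a, x> = <f, phi>,
  and <theta, x> = <k, theta> on K2.  Finally k is orthogonal to R(A1) and R(A2^* ), so replacing
  xt by k + xp changes neither of these projections and kills the K2-component of e.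

  The closed range theorem itself rests on two classical facts: a closed operator with closed range
  has bounded preimages (Baire category and an iteration in the complete range), and a bounded
  functional on the closed range is represented by an element of it (Riesz).
*)

lemma lin_op_zero: assumes "lin_op D A" shows "0 \<in> D" "A 0 = 0"
proof -
  show "0 \<in> D" using assms by (simp add: lin_op_def subspace_0)
  moreover have "\<forall>c. \<forall>x\<in>D. A (c *\<^sub>R x) = c *\<^sub>R A x" using assms by (simp add: lin_op_def)
  ultimately show "A 0 = 0" by (metis scaleR_zero_left)
qed

lemma lin_op_add: "lin_op D A \<Longrightarrow> x \<in> D \<Longrightarrow> y \<in> D \<Longrightarrow> x + y \<in> D \<and> A (x + y) = A x + A y"
  by (simp add: lin_op_def subspace_add)

lemma lin_op_scale: "lin_op D A \<Longrightarrow> x \<in> D \<Longrightarrow> c *\<^sub>R x \<in> D \<and> A (c *\<^sub>R x) = c *\<^sub>R A x"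
  by (simp add: lin_op_def subspace_scale)

lemma lin_op_diff:
  assumes "lin_op D A" "x \<in> D" "y \<in> D" shows "x - y \<in> D \<and> A (x - y) = A x - A y"
proof -
  have "(-1) *\<^sub>R y \<in> D \<and> A ((-1) *\<^sub>R y) = (-1) *\<^sub>R A y" using lin_op_scale assms by blast
  then show ?thesis using lin_op_add[OF assms(1,2), of "(-1) *\<^sub>R y"] by simp
qed

lemma subspace_ran: assumes "lin_op D A" shows "subspace (ran D A)"
  unfolding subspace_def ran_def
proof (intro conjI ballI allI)
  show "0 \<in> A ` D" using lin_op_zero[OF assms] by force
  fix u v assume "u \<in> A ` D" "v \<in> A ` D"
  then obtain a b where "a \<in> D" "b \<in> D" "u = A a" "v = A b" by blast
  then show "u + v \<in> A ` D" using lin_op_add[OF assms, of a b] by (metis image_eqI)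
next
  fix c u assume "u \<in> A ` D"
  then obtain a where "a \<in> D" "u = A a" by blast
  then show "c *\<^sub>R u \<in> A ` D" using lin_op_scale[OF assms, of a c] by (metis image_eqI)
qed

lemma subspace_ker: assumes "lin_op D A" shows "subspace (ker D A)"
  unfolding subspace_def ker_def
  using lin_op_zero[OF assms] lin_op_add[OF assms] lin_op_scale[OF assms] by auto

lemma closed_op_limit:
  fixes A :: "'a::real_normed_vector \<Rightarrow> 'b::real_normed_vector"
  assumes "closed_op D A" "\<And>n. X n \<in> D" "X \<longlonglongrightarrow> x" "(\<lambda>n. A (X n)) \<longlonglongrightarrow> y"
  shows "x \<in> D \<and> A x = y"
proof -
  have c: "closed {(x, A x) | x. x \<in> D}" using assms(1) by (simp add: closed_op_def)
  have t: "(\<lambda>n. (X n, A (X n))) \<longlonglongrightarrow> (x, y)" using assms(3,4) by (rule tendsto_Pair)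
  have "\<forall>n. (X n, A (X n)) \<in> {(x, A x) | x. x \<in> D}" using assms(2) by blast
  then have "(x, y) \<in> {(x, A x) | x. x \<in> D}"
    using c[unfolded closed_sequential_limits, rule_format, of "\<lambda>n. (X n, A (X n))"] t by blast
  then show ?thesis by auto
qed

lemma closed_ker:
  fixes A :: "'a::real_normed_vector \<Rightarrow> 'b::real_normed_vector"
  assumes "closed_op D A" shows "closed (ker D A)"
  unfolding closed_sequential_limits
proof (intro allI impI)
  fix X l assume h: "(\<forall>n. X n \<in> ker D A) \<and> X \<longlonglongrightarrow> l"
  then have "\<And>n. X n \<in> D" "\<And>n. A (X n) = 0" by (auto simp: ker_def)
  then have "l \<in> D \<and> A l = 0" using closed_op_limit[OF assms, of X l 0] h by simp
  then show "l \<in> ker D A" by (simp add: ker_def)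
qed

section \<open>Orthogonal projections onto closed subspaces\<close>

lemma orth_compl_subspace: "subspace (orth_compl S)"
  unfolding subspace_def orth_compl_def by (auto simp: inner_add_left)

lemma orth_compl_closed: "closed (orth_compl S)"
proof -
  have "orth_compl S = (\<Inter>s\<in>S. {x. inner s x = 0})" by (auto simp: orth_compl_def inner_commute)
  then show ?thesis by (auto intro: closed_hyperplane)
qed

lemma subset_orth_compl_orth_compl: "S \<subseteq> orth_compl (orth_compl S)"
  by (auto simp: orth_compl_def inner_commute)

lemma orth_compl_inter_eq_0: "x \<in> S \<Longrightarrow> x \<in> orth_compl S \<Longrightarrow> x = 0"
  unfolding orth_compl_def using inner_eq_zero_iff by blast

lemma orth_proj_eqI:
  assumes "p \<in> S" "\<forall>s\<in>S. inner (x - p) s = 0" shows "orth_proj S x = p"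
  unfolding orth_proj_def
proof (rule the_equality)
  show "p \<in> S \<and> (\<forall>s\<in>S. inner (x - p) s = 0)" using assms by blast
  fix q assume q: "q \<in> S \<and> (\<forall>s\<in>S. inner (x - q) s = 0)"
  have "inner (x - p) p = 0" "inner (x - p) q = 0" "inner (x - q) p = 0" "inner (x - q) q = 0"
    using assms q by auto
  then have "inner (q - p) (q - p) = 0" by (simp add: inner_diff algebra_simps)
  then show "q = p" by simp
qed

lemma parallelogram_midpoint:
  fixes x a b :: "'a::real_inner"
  shows "(norm (a - b))\<^sup>2 = 2 * (norm (x - a))\<^sup>2 + 2 * (norm (x - b))\<^sup>2 - 4 * (norm (x - (1/2) *\<^sub>R (a + b)))\<^sup>2"
  by (simp add: power2_norm_eq_inner inner_diff_left inner_diff_right inner_add_left inner_add_right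
       inner_commute algebra_simps)

lemma minimizing_sequence_Cauchy:
  fixes S :: "'a::real_inner set"
  assumes "subspace S" and d: "\<And>y. y \<in> S \<Longrightarrow> d \<le> norm (x - y)" "0 \<le> d"
    and s: "\<And>n. s n \<in> S" "\<And>n. (norm (x - s n))\<^sup>2 \<le> d\<^sup>2 + 1 / real (Suc n)"
  shows "Cauchy s"
proof (rule metric_CauchyI)
  have par: "(norm (s m - s n))\<^sup>2 \<le> 2 / real (Suc m) + 2 / real (Suc n)" for m n
  proof -
    have "(1/2) *\<^sub>R (s m + s n) \<in> S" using assms(1) s(1) by (simp add: subspace_add subspace_scale)
    then have "d\<^sup>2 \<le> (norm (x - (1/2) *\<^sub>R (s m + s n)))\<^sup>2" using d by (simp add: power_mono)
    then show ?thesis using parallelogram_midpoint[of "s m" "s n" x] s(2)[of m] s(2)[of n] by linarith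
  qed
  fix e :: real assume e: "e > 0"
  obtain N :: nat where "4 / e\<^sup>2 < real N" using reals_Archimedean2 by blast
  then have N: "4 / e\<^sup>2 < real (Suc N)" by simp
  show "\<exists>M. \<forall>m\<ge>M. \<forall>n\<ge>M. dist (s m) (s n) < e"
  proof (intro exI allI impI)
    fix m n assume mn: "N \<le> m" "N \<le> n"
    have "2 / real (Suc m) \<le> 2 / real (Suc N)" "2 / real (Suc n) \<le> 2 / real (Suc N)"
      using mn by (auto intro!: divide_left_mono)
    moreover have "4 / real (Suc N) < e\<^sup>2" using N e by (simp add: field_simps)
    ultimately have "(norm (s m - s n))\<^sup>2 < e\<^sup>2" using par[of m n] by linarith
    then show "dist (s m) (s n) < e" using e by (simp add: dist_norm power2_less_imp_less)
  qed
qed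

lemma closed_subspace_nearest_point:
  fixes S :: "'a::{real_inner,complete_space} set"
  assumes "subspace S" "closed S"
  obtains p where "p \<in> S" "\<And>y. y \<in> S \<Longrightarrow> norm (x - p) \<le> norm (x - y)"
proof -
  define d where "d = infdist x S"
  have d0: "0 \<le> d" by (simp add: d_def infdist_nonneg)
  have dle: "d \<le> norm (x - y)" if "y \<in> S" for y
    using infdist_le[OF that, of x] by (simp add: d_def dist_norm)
  have "\<exists>s\<in>S. (norm (x - s))\<^sup>2 \<le> d\<^sup>2 + 1 / real (Suc n)" for n
  proof -
    have "d < sqrt (d\<^sup>2 + 1 / real (Suc n))" by (intro real_less_rsqrt) simp
    moreover have "S \<noteq> {}" using assms(1) subspace_0 by blast
    ultimately obtain s where s: "s \<in> S" "dist x s < sqrt (d\<^sup>2 + 1 / real (Suc n))"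
      by (auto simp: d_def infdist_notempty cINF_less_iff)
    then have "(norm (x - s))\<^sup>2 < (sqrt (d\<^sup>2 + 1 / real (Suc n)))\<^sup>2"
      by (intro power_strict_mono) (auto simp: dist_norm)
    then show ?thesis using s(1) by (auto intro!: bexI[of _ s])
  qed
  then obtain s where s: "\<And>n. s n \<in> S" "\<And>n. (norm (x - s n))\<^sup>2 \<le> d\<^sup>2 + 1 / real (Suc n)"
    by metis
  have "Cauchy s" using minimizing_sequence_Cauchy[OF assms(1) dle d0 s] .
  then obtain p where p: "s \<longlonglongrightarrow> p" using Cauchy_convergent convergent_def by blast
  have "(\<lambda>n. (norm (x - s n))\<^sup>2) \<longlonglongrightarrow> (norm (x - p))\<^sup>2" using p by (intro tendsto_intros)
  moreover have "(\<lambda>n. d\<^sup>2 + 1 / real (Suc n)) \<longlonglongrightarrow> d\<^sup>2 + 0"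
    by (intro tendsto_intros LIMSEQ_inverse_real_of_nat[unfolded inverse_eq_divide])
  ultimately have "(norm (x - p))\<^sup>2 \<le> d\<^sup>2 + 0" by (rule LIMSEQ_le) (use s(2) in blast)
  then have px: "norm (x - p) \<le> d" using d0 power2_le_imp_le by simp
  have "p \<in> S" using assms(2) closed_sequential_limits p s(1) by blast
  then show ?thesis
  proof (rule that)
    fix y assume "y \<in> S"
    then show "norm (x - p) \<le> norm (x - y)" using dle[of y] px by linarith
  qed
qed

lemma nearest_point_orth:
  fixes S :: "'a::real_inner set"
  assumes "subspace S" "p \<in> S" "\<And>y. y \<in> S \<Longrightarrow> norm (x - p) \<le> norm (x - y)" "t \<in> S"
  shows "inner (x - p) t = 0"
proof (rule ccontr)
  define c where "c = inner (x - p) t"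
  assume "c \<noteq> 0"
  then have t: "t \<noteq> 0" by (auto simp: c_def)
  define \<tau> where "\<tau> = c / (norm t)\<^sup>2"
  have "p + \<tau> *\<^sub>R t \<in> S" using assms by (simp add: subspace_add subspace_scale)
  then have "(norm (x - p))\<^sup>2 \<le> (norm ((x - p) - \<tau> *\<^sub>R t))\<^sup>2"
    using assms(3) by (simp add: power_mono algebra_simps)
  also have "\<dots> = (norm (x - p))\<^sup>2 - 2 * \<tau> * c + \<tau>\<^sup>2 * (norm t)\<^sup>2"
    unfolding power2_norm_eq_inner c_def
    by (simp add: inner_diff_left inner_diff_right inner_commute power2_eq_square)
  also have "\<dots> = (norm (x - p))\<^sup>2 - c\<^sup>2 / (norm t)\<^sup>2"
    using t by (simp add: \<tau>_def field_simps power2_eq_square)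
  finally have "c\<^sup>2 / (norm t)\<^sup>2 \<le> 0" by linarith
  then show False using t \<open>c \<noteq> 0\<close> by (simp add: divide_le_0_iff)
qed

lemma
  fixes S :: "'a::{real_inner,complete_space} set"
  assumes "subspace S" "closed S"
  shows orth_proj_in: "orth_proj S x \<in> S"
    and orth_proj_orth: "s \<in> S \<Longrightarrow> inner (x - orth_proj S x) s = 0"
proof -
  obtain p where p: "p \<in> S" "\<And>y. y \<in> S \<Longrightarrow> norm (x - p) \<le> norm (x - y)"
    using closed_subspace_nearest_point[OF assms] by blast
  have "orth_proj S x = p" using nearest_point_orth[OF assms(1) p] p(1) by (blast intro: orth_proj_eqI)
  then show "orth_proj S x \<in> S" "s \<in> S \<Longrightarrow> inner (x - orth_proj S x) s = 0"
    using p nearest_point_orth[OF assms(1) p] by auto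
qed

lemma orth_proj_eq_0: "subspace S \<Longrightarrow> x \<in> orth_compl S \<Longrightarrow> orth_proj S x = 0"
  by (rule orth_proj_eqI) (auto simp: orth_compl_def subspace_0)

lemma orth_proj_add_orth_compl:
  fixes S :: "'a::{real_inner,complete_space} set"
  assumes "subspace S" "closed S" "k \<in> orth_compl S"
  shows "orth_proj S (x + k) = orth_proj S x"
  using assms orth_proj_orth[OF assms(1,2), of _ x]
  by (intro orth_proj_eqI orth_proj_in) (auto simp: orth_compl_def inner_add_left algebra_simps)

lemma orth_compl_orth_compl:
  fixes S :: "'a::{real_inner,complete_space} set"
  assumes "subspace S" "closed S"
  shows "orth_compl (orth_compl S) = S"
proof
  show "orth_compl (orth_compl S) \<subseteq> S"
  proof
    fix x assume x: "x \<in> orth_compl (orth_compl S)"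
    have "x - orth_proj S x \<in> orth_compl S"
      using orth_proj_orth[OF assms] by (simp add: orth_compl_def)
    moreover have "orth_proj S x \<in> orth_compl (orth_compl S)"
      using subset_orth_compl_orth_compl orth_proj_in[OF assms] by blast
    then have "x - orth_proj S x \<in> orth_compl (orth_compl S)"
      using x by (simp add: subspace_diff[OF orth_compl_subspace])
    ultimately have "x - orth_proj S x = 0" by (rule orth_compl_inter_eq_0)
    then show "x \<in> S" using orth_proj_in[OF assms, of x] by simp
  qed
qed (rule subset_orth_compl_orth_compl)

lemma densely_defined_orth_eq_0:
  assumes "densely_defined D" "\<forall>x\<in>D. inner x z = 0" shows "z = 0"
proof -
  have "D \<subseteq> {x. inner z x = 0}" using assms(2) by (auto simp: inner_commute)
  then have "closure D \<subseteq> {x. inner z x = 0}" by (intro closure_minimal) (auto intro: closed_hyperplane)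
  then have "inner z z = 0" using assms(1) unfolding densely_defined_def by blast
  then show ?thesis by simp
qed

lemma adj_eqI:
  assumes "densely_defined D" "\<forall>x\<in>D. inner (A x) w = inner x z"
  shows "w \<in> adj_dom D A \<and> adj D A w = z"
proof
  show "w \<in> adj_dom D A" using assms(2) by (auto simp: adj_dom_def)
  show "adj D A w = z" unfolding adj_def
  proof (rule the_equality)
    show "\<forall>x\<in>D. inner (A x) w = inner x z" by fact
    fix z' assume "\<forall>x\<in>D. inner (A x) w = inner x z'"
    then have "\<forall>x\<in>D. inner x (z' - z) = 0" using assms(2) by (simp add: inner_diff_right)
    then show "z' = z" using densely_defined_orth_eq_0[OF assms(1), of "z' - z"] by simp
  qed
qed

lemma inner_adj:
  assumes "densely_defined D" "w \<in> adj_dom D A" "x \<in> D"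
  shows "inner (A x) w = inner x (adj D A w)"
proof -
  obtain z where z: "\<forall>x\<in>D. inner (A x) w = inner x z" using assms(2) by (auto simp: adj_dom_def)
  then have "adj D A w = z" using adj_eqI[OF assms(1) z] by blast
  then show ?thesis using z assms(3) by simp
qed

lemma ker_adj_eq_orth_compl_ran:
  assumes "densely_defined D"
  shows "ker (adj_dom D A) (adj D A) = orth_compl (ran D A)"
proof
  show "ker (adj_dom D A) (adj D A) \<subseteq> orth_compl (ran D A)"
    using inner_adj[OF assms, where A = A] by (auto simp: ker_def orth_compl_def ran_def inner_commute)
  show "orth_compl (ran D A) \<subseteq> ker (adj_dom D A) (adj D A)"
  proof
    fix w assume "w \<in> orth_compl (ran D A)"
    then have "\<forall>x\<in>D. inner (A x) w = inner x 0" by (auto simp: orth_compl_def ran_def inner_commute)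
    then have "w \<in> adj_dom D A \<and> adj D A w = 0" by (rule adj_eqI[OF assms])
    then show "w \<in> ker (adj_dom D A) (adj D A)" by (simp add: ker_def)
  qed
qed

lemma ran_adj_subset_orth_compl_ker:
  assumes "densely_defined D"
  shows "ran (adj_dom D A) (adj D A) \<subseteq> orth_compl (ker D A)"
proof
  fix y assume "y \<in> ran (adj_dom D A) (adj D A)"
  then obtain w where w: "w \<in> adj_dom D A" "y = adj D A w" by (auto simp: ran_def)
  have "inner y n = 0" if "n \<in> ker D A" for n
    using inner_adj[OF assms w(1), of n] that w(2) by (simp add: ker_def inner_commute)
  then show "y \<in> orth_compl (ker D A)" by (simp add: orth_compl_def)
qed

section \<open>Bounded preimages for closed operators with closed range\<close>

lemma geometric_increments_convergent:
  fixes s :: "nat \<Rightarrow> 'a::{real_normed_vector,complete_space}"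
  assumes "s 0 = 0" and incr: "\<And>k. norm (s (Suc k) - s k) \<le> C * (1/2) ^ k"
  obtains x where "s \<longlonglongrightarrow> x" "norm x \<le> 2 * C"
proof -
  have C: "C \<ge> 0" using order_trans[OF norm_ge_zero incr[of 0]] by simp
  have tail: "norm (s (n + j) - s n) \<le> 2 * C * ((1/2) ^ n - (1/2) ^ (n + j))" for n j
  proof (induction j)
    case (Suc j)
    have "norm (s (n + Suc j) - s n) \<le> norm (s (n + j) - s n) + norm (s (Suc (n + j)) - s (n + j))"
      using norm_triangle_ineq[of "s (n + j) - s n" "s (Suc (n + j)) - s (n + j)"] by simp
    also have "\<dots> \<le> 2 * C * ((1/2) ^ n - (1/2) ^ (n + j)) + C * (1/2) ^ (n + j)"
      using Suc incr[of "n + j"] by linarith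
    finally show ?case by (simp add: algebra_simps)
  qed simp
  have dist_le: "dist (s m) (s n) \<le> 2 * C * (1/2) ^ n" if nm: "n \<le> m" for m n
  proof -
    obtain j where "m = n + j" using le_Suc_ex[OF nm] by blast
    moreover have "2 * C * ((1/2) ^ n - (1/2) ^ (n + j)) \<le> 2 * C * (1/2) ^ n"
      using C by (intro mult_left_mono) simp_all
    ultimately show ?thesis using tail[of n j] by (simp add: dist_norm)
  qed
  have "Cauchy s"
  proof (rule metric_CauchyI)
    fix e :: real assume "e > 0"
    have "(\<lambda>n. 2 * C * (1/2::real) ^ n) \<longlonglongrightarrow> 0"
      by (intro tendsto_mult_right_zero LIMSEQ_power_zero) simp
    then have "eventually (\<lambda>n. 2 * C * (1/2) ^ n < e / 2) sequentially"
      using \<open>e > 0\<close> by (intro order_tendstoD(2)) auto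
    then obtain N where N: "2 * C * (1/2) ^ N < e / 2" by (auto simp: eventually_sequentially)
    show "\<exists>M. \<forall>m\<ge>M. \<forall>n\<ge>M. dist (s m) (s n) < e"
    proof (intro exI allI impI)
      fix m n assume "N \<le> m" "N \<le> n"
      then show "dist (s m) (s n) < e"
        using dist_le[of N m] dist_le[of N n] dist_triangle2[of "s m" "s n" "s N"] N by linarith
    qed
  qed
  then obtain x where x: "s \<longlonglongrightarrow> x" using Cauchy_convergent convergent_def by blast
  moreover have "norm x \<le> 2 * C"
  proof (rule Lim_norm_ubound[OF _ x])
    show "\<forall>\<^sub>F k in sequentially. norm (s k) \<le> 2 * C"
      using dist_le[of 0] assms(1) by (simp add: dist_norm)
  qed simp
  ultimately show ?thesis by (rule that)
qed

lemma Baire_closed_cover_ball: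
  fixes R :: "'a::{metric_space,complete_space} set"
  assumes R: "closed R" "R \<noteq> {}" and T: "\<And>n::nat. closed (T n)" "\<And>n. T n \<subseteq> R"
    and cover: "R \<subseteq> (\<Union>n. T n)"
  shows "\<exists>n. \<exists>v0\<in>R. \<exists>r>0. \<forall>v\<in>R. dist v v0 < r \<longrightarrow> v \<in> T n"
proof (rule ccontr)
  assume no_ball: "\<not> ?thesis"
  have "(top_of_set R) interior_of (T n) = {}" for n
  proof (rule ccontr)
    assume "(top_of_set R) interior_of (T n) \<noteq> {}"
    then obtain v0 U where U: "openin (top_of_set R) U" "v0 \<in> U" "U \<subseteq> T n"
      by (auto simp: interior_of_def)
    then obtain r where "r > 0" "\<forall>v\<in>R. dist v v0 < r \<longrightarrow> v \<in> U" "v0 \<in> R"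
      by (metis openin_euclidean_subtopology_iff subsetD)
    then show False using no_ball U(3) by blast
  qed
  moreover have "completely_metrizable_space (top_of_set R)"
    by (rule completely_metrizable_space_closedin[OF completely_metrizable_space_euclidean])
       (simp add: closed_closedin[symmetric] R(1))
  ultimately have "(top_of_set R) interior_of (\<Union>n. T n) = {}"
    using T by (intro Baire_category_alt) (auto simp: closed_subset)
  moreover have "R \<subseteq> (top_of_set R) interior_of (\<Union>n. T n)"
    using interior_of_mono[OF cover, of "top_of_set R"]
    by (metis interior_of_topspace topspace_euclidean_subtopology)
  ultimately show False using R(2) by blast
qed

lemma closed_range_Baire_ball:
  fixes A :: "'a::real_normed_vector \<Rightarrow> 'b::{real_normed_vector,complete_space}"
  assumes lin: "lin_op D A" and R: "closed (ran D A)"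
  shows "\<exists>n::nat. \<exists>v0\<in>ran D A. \<exists>r>0. \<forall>v\<in>ran D A. dist v v0 < r \<longrightarrow>
            v \<in> closure (A ` (D \<inter> cball 0 (real n)))"
proof (rule Baire_closed_cover_ball[OF R])
  show "ran D A \<noteq> {}" using subspace_0[OF subspace_ran[OF lin]] by blast
  show "closure (A ` (D \<inter> cball 0 (real n))) \<subseteq> ran D A" for n
    using R by (intro closure_minimal) (auto simp: ran_def)
  show "ran D A \<subseteq> (\<Union>n. closure (A ` (D \<inter> cball 0 (real n))))"
  proof
    fix v assume "v \<in> ran D A"
    then obtain x where x: "x \<in> D" "v = A x" by (auto simp: ran_def)
    obtain n :: nat where "norm x \<le> real n" using real_arch_simple by blast
    then have "v \<in> closure (A ` (D \<inter> cball 0 (real n)))" using x closure_subset by fastforce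
    then show "v \<in> (\<Union>n. closure (A ` (D \<inter> cball 0 (real n))))" by blast
  qed
qed simp

lemma approx_preimage_near_zero:
  fixes A :: "'a::real_normed_vector \<Rightarrow> 'b::real_normed_vector"
  assumes lin: "lin_op D A" and v0: "v0 \<in> ran D A"
    and ball: "\<forall>v\<in>ran D A. dist v v0 < r \<longrightarrow> v \<in> closure (A ` (D \<inter> cball 0 \<rho>))"
    and w: "w \<in> ran D A" "norm w < r" and e: "\<epsilon> > 0"
  shows "\<exists>x\<in>D. norm x \<le> 2 * \<rho> \<and> norm (A x - w) < \<epsilon>"
proof -
  have "v0 + w \<in> ran D A" using subspace_add[OF subspace_ran[OF lin] v0 w(1)] .
  then have c1: "v0 + w \<in> closure (A ` (D \<inter> cball 0 \<rho>))" using ball w(2) by (simp add: dist_norm)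
  obtain x1 where x1: "x1 \<in> D" "norm x1 \<le> \<rho>" "dist (A x1) (v0 + w) < \<epsilon> / 2"
    using closure_approachable[THEN iffD1, OF c1, rule_format, of "\<epsilon> / 2"] e by auto
  have "r > 0" using w(2) norm_ge_zero[of w] by linarith
  then have c2: "v0 \<in> closure (A ` (D \<inter> cball 0 \<rho>))" using ball v0 by simp
  obtain x2 where x2: "x2 \<in> D" "norm x2 \<le> \<rho>" "dist (A x2) v0 < \<epsilon> / 2"
    using closure_approachable[THEN iffD1, OF c2, rule_format, of "\<epsilon> / 2"] e by auto
  have x: "x1 - x2 \<in> D \<and> A (x1 - x2) = A x1 - A x2" by (rule lin_op_diff[OF lin x1(1) x2(1)])
  have "norm (x1 - x2) \<le> 2 * \<rho>" using x1(2) x2(2) norm_triangle_ineq4[of x1 x2] by linarith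
  moreover have "A (x1 - x2) - w = (A x1 - (v0 + w)) - (A x2 - v0)" using x by (simp add: algebra_simps)
  then have "norm (A (x1 - x2) - w) \<le> norm (A x1 - (v0 + w)) + norm (A x2 - v0)"
    by (metis norm_triangle_ineq4)
  then have "norm (A (x1 - x2) - w) < \<epsilon>" using x1(3) x2(3) by (simp add: dist_norm)
  ultimately show ?thesis using x by blast
qed

lemma closed_range_approx_preimage:
  fixes A :: "'a::real_normed_vector \<Rightarrow> 'b::{real_normed_vector,complete_space}"
  assumes lin: "lin_op D A" and R: "closed (ran D A)"
  obtains M0 where "M0 \<ge> 0"
    "\<And>w \<epsilon>. w \<in> ran D A \<Longrightarrow> \<epsilon> > 0 \<Longrightarrow> \<exists>x\<in>D. norm x \<le> M0 * norm w \<and> norm (A x - w) < \<epsilon>"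
proof -
  obtain n :: nat and v0 r where v0: "v0 \<in> ran D A" and r: "r > 0"
    and ball: "\<forall>v\<in>ran D A. dist v v0 < r \<longrightarrow> v \<in> closure (A ` (D \<inter> cball 0 (real n)))"
    using closed_range_Baire_ball[OF assms] by blast
  show ?thesis
  proof (rule that)
    show "4 * real n / r \<ge> 0" using r by simp
    fix w and \<epsilon> :: real assume wR: "w \<in> ran D A" and e: "\<epsilon> > 0"
    show "\<exists>x\<in>D. norm x \<le> 4 * real n / r * norm w \<and> norm (A x - w) < \<epsilon>"
    proof (cases "w = 0")
      case True
      then show ?thesis using lin_op_zero[OF lin] e by (intro bexI[of _ 0]) auto
    next
      case False
      \<comment> \<open>Rescale w into the ball of radius r, approximate there, and scale back.\<close>
      define c where "c = r / (2 * norm w)"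
      have c: "c > 0" using False r by (simp add: c_def)
      have "c *\<^sub>R w \<in> ran D A" using subspace_scale[OF subspace_ran[OF lin] wR] .
      moreover have "norm (c *\<^sub>R w) < r" using False r c by (simp add: c_def)
      ultimately obtain x' where x': "x' \<in> D" "norm x' \<le> 2 * real n" "norm (A x' - c *\<^sub>R w) < c * \<epsilon>"
        using approx_preimage_near_zero[OF lin v0 ball] c e by (metis mult_pos_pos)
      have x: "(1/c) *\<^sub>R x' \<in> D \<and> A ((1/c) *\<^sub>R x') = (1/c) *\<^sub>R A x'"
        by (rule lin_op_scale[OF lin x'(1)])
      have "norm ((1/c) *\<^sub>R x') \<le> (1/c) * (2 * real n)" using x'(2) c by (simp add: divide_right_mono)
      also have "\<dots> = 4 * real n / r * norm w" using False r by (simp add: c_def field_simps)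
      finally have "norm ((1/c) *\<^sub>R x') \<le> 4 * real n / r * norm w" .
      moreover have "A ((1/c) *\<^sub>R x') - w = (1/c) *\<^sub>R (A x' - c *\<^sub>R w)"
        using x c by (simp add: algebra_simps)
      then have "norm (A ((1/c) *\<^sub>R x') - w) = norm (A x' - c *\<^sub>R w) / c" using c by simp
      then have "norm (A ((1/c) *\<^sub>R x') - w) < \<epsilon>"
        using x'(3) c by (simp add: divide_less_eq mult.commute)
      ultimately show ?thesis using x by blast
    qed
  qed
qed

lemma closed_range_approx_sequence:
  fixes A :: "'a::real_normed_vector \<Rightarrow> 'b::real_normed_vector"
  assumes lin: "lin_op D A" and M0: "M0 \<ge> 0"
    and approx: "\<And>w \<epsilon>. w \<in> ran D A \<Longrightarrow> \<epsilon> > 0 \<Longrightarrow> \<exists>x\<in>D. norm x \<le> M0 * norm w \<and> norm (A x - w) < \<epsilon>"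
    and v: "v \<in> ran D A" "v \<noteq> 0"
  obtains s where "s 0 = 0" "\<And>k. s k \<in> D" "\<And>k. norm (v - A (s k)) \<le> norm v * (1/2) ^ k"
    "\<And>k. norm (s (Suc k) - s k) \<le> M0 * norm v * (1/2) ^ k"
proof -
  define P where "P k w =
    (SOME x. x \<in> D \<and> norm x \<le> M0 * norm w \<and> norm (A x - w) < norm v * (1/2) ^ Suc k)" for k w
  have P: "P k w \<in> D \<and> norm (P k w) \<le> M0 * norm w \<and> norm (A (P k w) - w) < norm v * (1/2) ^ Suc k"
    if "w \<in> ran D A" for k w
    unfolding P_def by (rule someI_ex) (use approx[OF that, of "norm v * (1/2) ^ Suc k"] v(2) in auto)
  define s where "s = rec_nat 0 (\<lambda>k sk. sk + P k (v - A sk))"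
  have s0: "s 0 = 0" and sS: "s (Suc k) = s k + P k (v - A (s k))" for k by (simp_all add: s_def)
  have residual_ran: "v - A (s k) \<in> ran D A" if "s k \<in> D" for k
    using that v(1) subspace_diff[OF subspace_ran[OF lin]] by (auto simp: ran_def)
  have I: "s k \<in> D \<and> norm (v - A (s k)) \<le> norm v * (1/2) ^ k" for k
  proof (induction k)
    case 0 then show ?case using lin_op_zero[OF lin] s0 by simp
  next
    case (Suc k)
    define w where "w = v - A (s k)"
    note p = P[OF residual_ran, of k k, folded w_def]
    have "s (Suc k) \<in> D \<and> A (s (Suc k)) = A (s k) + A (P k w)"
      using lin_op_add[OF lin, of "s k" "P k w"] Suc p by (simp add: sS w_def)
    moreover have "norm (A (P k w) - w) \<le> norm v * (1/2) ^ Suc k" using p Suc by simp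
    ultimately show ?case by (simp add: w_def norm_minus_commute algebra_simps)
  qed
  show ?thesis
  proof (rule that[of s])
    fix k
    define w where "w = v - A (s k)"
    have "norm (s (Suc k) - s k) = norm (P k w)" by (simp add: sS w_def)
    also have "\<dots> \<le> M0 * norm w" using P[OF residual_ran, of k k] I by (simp add: w_def)
    also have "\<dots> \<le> M0 * (norm v * (1/2) ^ k)" using I[of k] M0 by (simp add: w_def mult_left_mono)
    finally show "norm (s (Suc k) - s k) \<le> M0 * norm v * (1/2) ^ k" by simp
  qed (use s0 I in auto)
qed

lemma closed_range_bounded_preimage:
  fixes A :: "'a::{real_normed_vector,complete_space} \<Rightarrow> 'b::{real_normed_vector,complete_space}"
  assumes lin: "lin_op D A" and cl: "closed_op D A" and R: "closed (ran D A)"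
  obtains M where "M > 0" "\<And>v. v \<in> ran D A \<Longrightarrow> \<exists>x\<in>D. A x = v \<and> norm x \<le> M * norm v"
proof -
  obtain M0 where M0: "M0 \<ge> 0"
    and approx: "\<And>w \<epsilon>. w \<in> ran D A \<Longrightarrow> \<epsilon> > 0 \<Longrightarrow> \<exists>x\<in>D. norm x \<le> M0 * norm w \<and> norm (A x - w) < \<epsilon>"
    using closed_range_approx_preimage[OF lin R] by blast
  show ?thesis
  proof (rule that[of "2 * M0 + 1"])
    show "2 * M0 + 1 > 0" using M0 by simp
    fix v assume v: "v \<in> ran D A"
    show "\<exists>x\<in>D. A x = v \<and> norm x \<le> (2 * M0 + 1) * norm v"
    proof (cases "v = 0")
      case True
      then show ?thesis using lin_op_zero[OF lin] by (intro bexI[of _ 0]) auto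
    next
      case False
      obtain s where s: "s 0 = 0" "\<And>k. s k \<in> D" "\<And>k. norm (v - A (s k)) \<le> norm v * (1/2) ^ k"
        "\<And>k. norm (s (Suc k) - s k) \<le> M0 * norm v * (1/2) ^ k"
        using closed_range_approx_sequence[OF lin M0 approx v False] by blast
      obtain x where x: "s \<longlonglongrightarrow> x" "norm x \<le> 2 * (M0 * norm v)"
        using geometric_increments_convergent[of s "M0 * norm v"] s(1,4) by blast
      have "\<forall>\<^sub>F k in sequentially. norm (v - A (s k)) \<le> norm v * (1/2) ^ k" using s(3) by simp
      moreover have "(\<lambda>k. norm v * (1/2::real) ^ k) \<longlonglongrightarrow> 0"
        by (intro tendsto_mult_right_zero LIMSEQ_power_zero) simp
      ultimately have "(\<lambda>k. v - A (s k)) \<longlonglongrightarrow> 0" by (rule Lim_null_comparison)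
      then have "(\<lambda>k. v - (v - A (s k))) \<longlonglongrightarrow> v - 0" by (intro tendsto_intros)
      then have "(\<lambda>k. A (s k)) \<longlonglongrightarrow> v" by simp
      then have "x \<in> D \<and> A x = v" using closed_op_limit[OF cl s(2) x(1)] by blast
      moreover have "2 * (M0 * norm v) \<le> (2 * M0 + 1) * norm v" by (simp add: algebra_simps)
      then have "norm x \<le> (2 * M0 + 1) * norm v" using x(2) by linarith
      ultimately show ?thesis by blast
    qed
  qed
qed

section \<open>The closed range theorem\<close>

lemma closed_zero_set_bounded_functional:
  fixes R :: "'b::real_normed_vector set" and l :: "'b \<Rightarrow> real"
  assumes sub: "subspace R" and cl: "closed R"
    and diff: "\<And>u v. u \<in> R \<Longrightarrow> v \<in> R \<Longrightarrow> l (u - v) = l u - l v"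
    and bd: "\<And>u. u \<in> R \<Longrightarrow> \<bar>l u\<bar> \<le> C * norm u"
  shows "closed {u \<in> R. l u = 0}"
  unfolding closed_sequential_limits
proof (intro allI impI)
  fix X z assume h: "(\<forall>n. X n \<in> {u \<in> R. l u = 0}) \<and> X \<longlonglongrightarrow> z"
  then have X: "\<And>n. X n \<in> R" "\<And>n. l (X n) = 0" by auto
  have zR: "z \<in> R" using cl h X(1) unfolding closed_sequential_limits by blast
  have bound: "\<bar>l z\<bar> \<le> C * norm (z - X n)" for n
    using bd[of "z - X n"] diff[OF zR X(1)] X(2) sub zR X(1) by (simp add: subspace_diff)
  have "(\<lambda>n. C * norm (z - X n)) \<longlonglongrightarrow> C * norm (z - z)"
    using h by (intro tendsto_intros) auto
  then have "(\<lambda>n. C * norm (z - X n)) \<longlonglongrightarrow> 0" by simp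
  then have "\<bar>l z\<bar> \<le> 0" by (rule LIMSEQ_le_const) (use bound in blast)
  then show "z \<in> {u \<in> R. l u = 0}" using zR by simp
qed

lemma riesz_representation_closed_subspace:
  fixes R :: "'b::{real_inner,complete_space} set" and l :: "'b \<Rightarrow> real"
  assumes sub: "subspace R" and cl: "closed R"
    and add: "\<And>u v. u \<in> R \<Longrightarrow> v \<in> R \<Longrightarrow> l (u + v) = l u + l v"
    and scale: "\<And>c u. u \<in> R \<Longrightarrow> l (c *\<^sub>R u) = c * l u"
    and bd: "\<And>u. u \<in> R \<Longrightarrow> \<bar>l u\<bar> \<le> C * norm u"
  shows "\<exists>w\<in>R. \<forall>u\<in>R. l u = inner u w"
proof (cases "\<forall>u\<in>R. l u = 0")
  case True then show ?thesis using subspace_0[OF sub] by (intro bexI[of _ 0]) auto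
next
  case False
  then obtain v where v: "v \<in> R" "l v \<noteq> 0" by blast
  have diff: "l (u - u') = l u - l u'" if "u \<in> R" "u' \<in> R" for u u'
    using add[OF that(1) subspace_neg[OF sub that(2)]] scale[OF that(2), of "-1"] by simp
  define Z where "Z = {u \<in> R. l u = 0}"
  have "l 0 = 0" using scale[OF subspace_0[OF sub], of 0] by simp
  then have subZ: "subspace Z"
    unfolding subspace_def Z_def using sub add scale by (auto simp: subspace_add subspace_scale subspace_0)
  have clZ: "closed Z"
    unfolding Z_def using closed_zero_set_bounded_functional[OF sub cl diff bd] .
  \<comment> \<open>The component of v orthogonal to the kernel spans the representing vector.\<close>
  define u0 where "u0 = v - orth_proj Z v"
  have pZ: "orth_proj Z v \<in> R" "l (orth_proj Z v) = 0" using orth_proj_in[OF subZ clZ] by (auto simp: Z_def)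
  have u0R: "u0 \<in> R" using sub v(1) pZ(1) by (simp add: u0_def subspace_diff)
  have lu0: "l u0 = l v" using diff[OF v(1) pZ(1)] pZ(2) by (simp add: u0_def)
  have nu0: "(norm u0)\<^sup>2 > 0" using lu0 v(2) \<open>l 0 = 0\<close> by auto
  define w where "w = (l u0 / (norm u0)\<^sup>2) *\<^sub>R u0"
  show ?thesis
  proof (intro bexI[of _ w] ballI)
    show "w \<in> R" using sub u0R by (simp add: w_def subspace_scale)
    fix u assume uR: "u \<in> R"
    define z where "z = u - (l u / l u0) *\<^sub>R u0"
    have sR: "(l u / l u0) *\<^sub>R u0 \<in> R" using sub u0R by (simp add: subspace_scale)
    have "l z = 0" using diff[OF uR sR] scale[OF u0R] lu0 v(2) by (simp add: z_def)
    then have "z \<in> Z" using sub uR sR by (simp add: Z_def z_def subspace_diff)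
    then have "inner u0 z = 0" using orth_proj_orth[OF subZ clZ] by (simp add: u0_def)
    then have "inner u u0 = (l u / l u0) * (norm u0)\<^sup>2"
      by (simp add: z_def inner_diff_right inner_commute power2_norm_eq_inner)
    then show "l u = inner u w"
      using nu0 lu0 v(2) by (simp add: w_def field_simps)
  qed
qed

lemma inner_orth_compl_ker_eq:
  assumes "lin_op D A" "y \<in> orth_compl (ker D A)" "x \<in> D" "x' \<in> D" "A x = A x'"
  shows "inner x y = inner x' y"
proof -
  have "x - x' \<in> ker D A" using lin_op_diff[OF assms(1,3,4)] assms(5) by (simp add: ker_def)
  then have "inner y (x - x') = 0" using assms(2) by (simp add: orth_compl_def)
  then show ?thesis by (simp add: inner_diff_right inner_commute)
qed

lemma orth_compl_ker_subset_ran_adj: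
  fixes A :: "'a::{real_inner,complete_space} \<Rightarrow> 'b::{real_inner,complete_space}"
  assumes dd: "dd_closed_op D A" and R: "closed (ran D A)"
  shows "orth_compl (ker D A) \<subseteq> ran (adj_dom D A) (adj D A)"
proof
  fix y assume y: "y \<in> orth_compl (ker D A)"
  have lin: "lin_op D A" and dens: "densely_defined D" and cl: "closed_op D A"
    using dd by (auto simp: dd_closed_op_def)
  obtain M where M: "\<And>v. v \<in> ran D A \<Longrightarrow> \<exists>x\<in>D. A x = v \<and> norm x \<le> M * norm v"
    using closed_range_bounded_preimage[OF lin cl R] by blast
  \<comment> \<open>Well defined on the range since y annihilates the kernel.\<close>
  define l where "l u = inner (SOME x. x \<in> D \<and> A x = u) y" for u
  have l: "l (A x) = inner x y" if "x \<in> D" for x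
  proof -
    have "(SOME x'. x' \<in> D \<and> A x' = A x) \<in> D \<and> A (SOME x'. x' \<in> D \<and> A x' = A x) = A x"
      using someI[of "\<lambda>x'. x' \<in> D \<and> A x' = A x" x] that by blast
    then show ?thesis unfolding l_def using inner_orth_compl_ker_eq[OF lin y] that by metis
  qed
  have "\<exists>w\<in>ran D A. \<forall>u\<in>ran D A. l u = inner u w"
  proof (rule riesz_representation_closed_subspace[OF subspace_ran[OF lin] R])
    fix u v assume "u \<in> ran D A" "v \<in> ran D A"
    then obtain a b where "a \<in> D" "b \<in> D" "u = A a" "v = A b" by (auto simp: ran_def)
    then show "l (u + v) = l u + l v" using lin_op_add[OF lin] l by (metis inner_add_left)
  next
    fix c u assume "u \<in> ran D A"
    then obtain a where "a \<in> D" "u = A a" by (auto simp: ran_def)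
    then show "l (c *\<^sub>R u) = c * l u" using lin_op_scale[OF lin] l by (metis inner_scaleR_left)
  next
    fix u assume "u \<in> ran D A"
    then obtain x where x: "x \<in> D" "A x = u" "norm x \<le> M * norm u" using M by blast
    have "\<bar>l u\<bar> \<le> norm x * norm y" using l[OF x(1)] x(2) Cauchy_Schwarz_ineq2 by metis
    also have "\<dots> \<le> M * norm u * norm y" using x(3) by (simp add: mult_right_mono)
    finally show "\<bar>l u\<bar> \<le> (M * norm y) * norm u" by (simp add: algebra_simps)
  qed
  then obtain w where "\<forall>u\<in>ran D A. l u = inner u w" by blast
  then have "\<forall>x\<in>D. inner (A x) w = inner x y" using l by (simp add: ran_def)
  then have "w \<in> adj_dom D A \<and> adj D A w = y" by (rule adj_eqI[OF dens])
  then show "y \<in> ran (adj_dom D A) (adj D A)" by (auto simp: ran_def)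
qed

theorem ran_adj_closed_range:
  fixes A :: "'a::{real_inner,complete_space} \<Rightarrow> 'b::{real_inner,complete_space}"
  assumes "dd_closed_op D A" "closed (ran D A)"
  shows "ran (adj_dom D A) (adj D A) = orth_compl (ker D A)"
  using orth_compl_ker_subset_ran_adj[OF assms] ran_adj_subset_orth_compl_ker assms(1)
  by (auto simp: dd_closed_op_def)

section \<open>Orthogonal decomposition and dual principles\<close>

lemma closed_subspace_inter_orth_compl:
  assumes "subspace V" "closed V"
  shows "subspace (V \<inter> orth_compl U)" "closed (V \<inter> orth_compl U)"
  using assms orth_compl_subspace orth_compl_closed by (auto intro: subspace_inter closed_Int)

lemma orth_proj_nested_decomposition:
  fixes U V :: "'a::{real_inner,complete_space} set"
  assumes U: "subspace U" "closed U" and V: "subspace V" "closed V" and UV: "U \<subseteq> V"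
  shows "orth_proj (V \<inter> orth_compl U) z = z - orth_proj U z - orth_proj (orth_compl V) z"
proof (rule orth_proj_eqI)
  define p q where "p = orth_proj U z" and "q = orth_proj (orth_compl V) z"
  have p: "p \<in> U" "\<And>u. u \<in> U \<Longrightarrow> inner (z - p) u = 0"
    unfolding p_def by (simp_all add: orth_proj_in orth_proj_orth U)
  have q: "q \<in> orth_compl V" "\<And>t. t \<in> orth_compl V \<Longrightarrow> inner (z - q) t = 0"
    unfolding q_def by (simp_all add: orth_proj_in orth_proj_orth orth_compl_subspace orth_compl_closed)
  have "inner (z - p - q) t = 0" if "t \<in> orth_compl V" for t
  proof -
    have "inner p t = 0" using that p(1) UV by (auto simp: orth_compl_def inner_commute)
    then show ?thesis using q(2)[OF that] by (simp add: inner_diff_left)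
  qed
  then have "z - p - q \<in> orth_compl (orth_compl V)" by (simp add: orth_compl_def)
  then have "z - p - q \<in> V" using orth_compl_orth_compl[OF V] by simp
  moreover have "inner (z - p - q) u = 0" if "u \<in> U" for u
    using p(2)[OF that] q(1) UV that by (auto simp: orth_compl_def inner_diff_left)
  ultimately show "z - p - q \<in> V \<inter> orth_compl U" by (simp add: orth_compl_def)
  show "\<forall>s\<in>V \<inter> orth_compl U. inner (z - (z - p - q)) s = 0"
  proof
    fix s assume s: "s \<in> V \<inter> orth_compl U"
    then have "inner p s = 0" "inner q s = 0" using p(1) q(1) by (auto simp: orth_compl_def inner_commute)
    then show "inner (z - (z - p - q)) s = 0" by (simp add: inner_add_left)
  qed
qed

lemma orth_proj_nested_pythagoras:
  fixes U V :: "'a::{real_inner,complete_space} set" and z :: 'a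
  assumes U: "subspace U" "closed U" and V: "subspace V" "closed V" and UV: "U \<subseteq> V"
  defines "p \<equiv> orth_proj U z" and "h \<equiv> orth_proj (V \<inter> orth_compl U) z"
    and "q \<equiv> orth_proj (orth_compl V) z"
  shows "z = p + h + q" "p \<in> U" "h \<in> V \<inter> orth_compl U" "q \<in> orth_compl V"
    "(norm z)\<^sup>2 = (norm p)\<^sup>2 + (norm h)\<^sup>2 + (norm q)\<^sup>2"
proof -
  note VU = closed_subspace_inter_orth_compl[OF V, of U]
  show "z = p + h + q" using orth_proj_nested_decomposition[OF assms(1-5)] by (simp add: p_def h_def q_def)
  show p: "p \<in> U" unfolding p_def using orth_proj_in[OF U] .
  show h: "h \<in> V \<inter> orth_compl U" unfolding h_def using orth_proj_in[OF VU] .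
  show q: "q \<in> orth_compl V" unfolding q_def by (simp add: orth_proj_in orth_compl_subspace orth_compl_closed)
  have "inner p h = 0" "inner p q = 0" "inner h q = 0"
    using p h q UV by (auto simp: orth_compl_def inner_commute)
  then show "(norm z)\<^sup>2 = (norm p)\<^sup>2 + (norm h)\<^sup>2 + (norm q)\<^sup>2"
    unfolding \<open>z = p + h + q\<close> power2_norm_eq_inner
    by (simp add: inner_add_left inner_add_right inner_commute)
qed

lemma orth_proj_nested_shift:
  fixes U V :: "'a::{real_inner,complete_space} set"
  assumes U: "subspace U" "closed U" and V: "subspace V" "closed V"
    and k: "orth_proj (V \<inter> orth_compl U) x = k" and xp: "xp \<in> orth_compl (V \<inter> orth_compl U)"
  shows "orth_proj (V \<inter> orth_compl U) (x - (k + xp)) = 0"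
    and "orth_proj U (x - xp) = orth_proj U (x - (k + xp))"
    and "orth_proj (orth_compl V) (x - xp) = orth_proj (orth_compl V) (x - (k + xp))"
proof -
  note VU = closed_subspace_inter_orth_compl[OF V, of U]
  have kVU: "k \<in> V \<inter> orth_compl U" using orth_proj_in[OF VU] k by blast
  have "x - k \<in> orth_compl (V \<inter> orth_compl U)"
    using orth_proj_orth[OF VU, of _ x] k by (simp add: orth_compl_def)
  then have "(x - k) - xp \<in> orth_compl (V \<inter> orth_compl U)"
    using xp subspace_diff[OF orth_compl_subspace] by blast
  then show "orth_proj (V \<inter> orth_compl U) (x - (k + xp)) = 0"
    using orth_proj_eq_0[OF VU(1)] by (simp add: algebra_simps)
  have "x - xp = (x - (k + xp)) + k" by simp
  moreover have "k \<in> orth_compl U" "k \<in> orth_compl (orth_compl V)"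
    using kVU subset_orth_compl_orth_compl by auto
  ultimately show "orth_proj U (x - xp) = orth_proj U (x - (k + xp))"
    and "orth_proj (orth_compl V) (x - xp) = orth_proj (orth_compl V) (x - (k + xp))"
    using orth_proj_add_orth_compl[OF U] orth_proj_add_orth_compl[OF orth_compl_subspace orth_compl_closed]
    by metis+
qed

lemma orth_proj_dual_le:
  fixes S :: "'a::{real_inner,complete_space} set"
  assumes "subspace S" "closed S" "a \<in> S"
  shows "2 * inner a e - inner a a \<le> (norm (orth_proj S e))\<^sup>2"
proof -
  have "inner (e - orth_proj S e) a = 0" by (rule orth_proj_orth[OF assms])
  then have "inner a e = inner a (orth_proj S e)" by (simp add: inner_commute inner_diff_right)
  moreover have "0 \<le> (norm (orth_proj S e - a))\<^sup>2" by simp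
  ultimately show ?thesis
    unfolding power2_norm_eq_inner by (simp add: inner_diff_left inner_diff_right inner_commute)
qed

lemma orth_proj_dual_eq:
  fixes S :: "'a::{real_inner,complete_space} set"
  assumes "subspace S" "closed S"
  shows "2 * inner (orth_proj S e) e - inner (orth_proj S e) (orth_proj S e) = (norm (orth_proj S e))\<^sup>2"
proof -
  have "inner (e - orth_proj S e) (orth_proj S e) = 0" by (rule orth_proj_orth[OF assms orth_proj_in[OF assms]])
  then show ?thesis by (simp add: power2_norm_eq_inner inner_diff_right inner_commute)
qed

lemma dual_functional_eq:
  fixes a x xt :: "'a::real_inner" and g \<phi> :: "'b::real_inner"
  assumes "inner g \<phi> = inner a x"
  shows "2 * inner g \<phi> - inner (2 *\<^sub>R xt + a) a = 2 * inner a (x - xt) - inner a a"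
  using assms by (simp add: algebra_simps inner_add_left inner_diff_right inner_commute)

lemma red_inv_eqI:
  assumes "u \<in> D \<inter> S" "A u = v" "\<And>u'. u' \<in> D \<inter> S \<Longrightarrow> A u' = v \<Longrightarrow> u' = u"
  shows "red_inv D A S v = u"
  unfolding red_inv_def by (rule the_equality) (use assms in blast)+

lemma red_inv_ran:
  fixes A :: "'a::{real_inner,complete_space} \<Rightarrow> 'b::{real_inner,complete_space}"
  assumes dd: "dd_closed_op D A" and R: "closed (ran D A)" and v: "v \<in> ran D A"
  shows "red_inv D A (ran (adj_dom D A) (adj D A)) v \<in> D \<inter> ran (adj_dom D A) (adj D A)
    \<and> A (red_inv D A (ran (adj_dom D A) (adj D A)) v) = v"
proof -
  have lin: "lin_op D A" and cl: "closed_op D A" using dd by (auto simp: dd_closed_op_def)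
  define N where "N = ker D A"
  have N: "subspace N" "closed N" unfolding N_def using subspace_ker[OF lin] closed_ker[OF cl] .
  obtain x where x: "x \<in> D" "A x = v" using v by (auto simp: ran_def)
  define u where "u = x - orth_proj N x"
  have "orth_proj N x \<in> D" "A (orth_proj N x) = 0" using orth_proj_in[OF N, of x] by (auto simp: N_def ker_def)
  then have u: "u \<in> D" "A u = v" using lin_op_diff[OF lin x(1)] x(2) by (auto simp: u_def)
  have uN: "u \<in> orth_compl N" using orth_proj_orth[OF N] by (simp add: u_def orth_compl_def)
  have uniq: "u' = u" if "u' \<in> D \<inter> orth_compl N" "A u' = v" for u'
  proof -
    have "u' - u \<in> N" using lin_op_diff[OF lin, of u' u] that u by (auto simp: N_def ker_def)
    moreover have "u' - u \<in> orth_compl N"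
      using that uN subspace_diff[OF orth_compl_subspace] by blast
    ultimately have "u' - u = 0" by (rule orth_compl_inter_eq_0)
    then show ?thesis by simp
  qed
  have "red_inv D A (orth_compl N) v = u" by (rule red_inv_eqI[OF _ _ uniq]) (use u uN in auto)
  then show ?thesis using u uN ran_adj_closed_range[OF dd R] by (simp add: N_def)
qed

lemma red_inv_ran_adj:
  fixes A :: "'a::{real_inner,complete_space} \<Rightarrow> 'b::{real_inner,complete_space}"
  assumes dens: "densely_defined D" and lin: "lin_op D A" and R: "closed (ran D A)"
    and w: "w \<in> ran (adj_dom D A) (adj D A)"
  shows "red_inv (adj_dom D A) (adj D A) (ran D A) w \<in> adj_dom D A \<inter> ran D A
    \<and> adj D A (red_inv (adj_dom D A) (adj D A) (ran D A) w) = w"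
proof -
  have RS: "subspace (ran D A)" "closed (ran D A)" using subspace_ran[OF lin] R .
  obtain y where y: "y \<in> adj_dom D A" "adj D A y = w" using w by (auto simp: ran_def)
  \<comment> \<open>Projecting onto the range only changes y by an element of the kernel of the adjoint.\<close>
  define u where "u = orth_proj (ran D A) y"
  have "inner (A x) u = inner x w" if "x \<in> D" for x
  proof -
    have "inner (y - u) (A x) = 0" using orth_proj_orth[OF RS] that by (simp add: u_def ran_def)
    then have "inner (A x) u = inner (A x) y" by (simp add: inner_diff_right inner_commute)
    then show ?thesis using inner_adj[OF dens y(1) that] y(2) by simp
  qed
  then have "\<forall>x\<in>D. inner (A x) u = inner x w" by blast
  then have u: "u \<in> adj_dom D A \<and> adj D A u = w" by (rule adj_eqI[OF dens])
  have uR: "u \<in> ran D A" using orth_proj_in[OF RS] by (simp add: u_def)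
  have uniq: "u' = u" if "u' \<in> adj_dom D A \<inter> ran D A" "adj D A u' = w" for u'
  proof -
    have "inner (A x) (u' - u) = 0" if "x \<in> D" for x
      using inner_adj[OF dens _ that, of u] inner_adj[OF dens _ that, of u'] \<open>u' \<in> adj_dom D A \<inter> ran D A\<close>
        \<open>adj D A u' = w\<close> u by (simp add: inner_diff_right)
    then have "u' - u \<in> orth_compl (ran D A)" by (auto simp: orth_compl_def ran_def inner_commute)
    moreover have "u' - u \<in> ran D A" using that uR subspace_diff[OF RS(1)] by blast
    ultimately have "u' - u = 0" using orth_compl_inter_eq_0 by blast
    then show ?thesis by simp
  qed
  have "red_inv (adj_dom D A) (adj D A) (ran D A) w = u" by (rule red_inv_eqI[OF _ _ uniq]) (use u uR in auto)
  then show ?thesis using u uR by simp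
qed

lemma dual_principle_ran:
  fixes A :: "'a::{real_inner,complete_space} \<Rightarrow> 'b::{real_inner,complete_space}"
  assumes dd: "dd_closed_op D A" and R: "closed (ran D A)" and x: "x \<in> adj_dom D A" "adj D A x = g"
    and eA: "orth_proj (ran D A) (x - xt) = eA"
  shows "(\<forall>\<phi>\<in>D. 2 * inner g \<phi> - inner (2 *\<^sub>R xt + A \<phi>) (A \<phi>) \<le> (norm eA)\<^sup>2)
     \<and> red_inv D A (ran (adj_dom D A) (adj D A)) eA \<in> D \<inter> ran (adj_dom D A) (adj D A)
     \<and> A (red_inv D A (ran (adj_dom D A) (adj D A)) eA) = eA
     \<and> (let \<phi> = red_inv D A (ran (adj_dom D A) (adj D A)) eA in
          2 * inner g \<phi> - inner (2 *\<^sub>R xt + A \<phi>) (A \<phi>) = (norm eA)\<^sup>2)"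
proof -
  have lin: "lin_op D A" and dens: "densely_defined D" using dd by (auto simp: dd_closed_op_def)
  have RS: "subspace (ran D A)" "closed (ran D A)" using subspace_ran[OF lin] R .
  have functional: "2 * inner g \<phi> - inner (2 *\<^sub>R xt + A \<phi>) (A \<phi>)
      = 2 * inner (A \<phi>) (x - xt) - inner (A \<phi>) (A \<phi>)"
    if "\<phi> \<in> D" for \<phi>
    using inner_adj[OF dens x(1) that] x(2) by (intro dual_functional_eq) (simp add: inner_commute)
  have "A \<phi> \<in> ran D A" if "\<phi> \<in> D" for \<phi> using that by (simp add: ran_def)
  then have le: "\<forall>\<phi>\<in>D. 2 * inner g \<phi> - inner (2 *\<^sub>R xt + A \<phi>) (A \<phi>) \<le> (norm eA)\<^sup>2"
    using functional orth_proj_dual_le[OF RS] by (simp add: eA[symmetric])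
  define \<phi> where "\<phi> = red_inv D A (ran (adj_dom D A) (adj D A)) eA"
  have \<phi>: "\<phi> \<in> D \<inter> ran (adj_dom D A) (adj D A) \<and> A \<phi> = eA"
    unfolding \<phi>_def eA[symmetric] using red_inv_ran[OF dd R] orth_proj_in[OF RS] by blast
  have "2 * inner g \<phi> - inner (2 *\<^sub>R xt + A \<phi>) (A \<phi>) = (norm eA)\<^sup>2"
    using functional[of \<phi>] \<phi> orth_proj_dual_eq[OF RS, of "x - xt", unfolded eA] by simp
  with le \<phi> show ?thesis unfolding Let_def \<phi>_def by blast
qed

lemma dual_principle_ran_adj:
  fixes A :: "'a::{real_inner,complete_space} \<Rightarrow> 'b::{real_inner,complete_space}"
  assumes dd: "dd_closed_op D A" and R: "closed (ran D A)" and x: "x \<in> D" "A x = f"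
    and eA: "orth_proj (ran (adj_dom D A) (adj D A)) (x - xt) = eA"
  shows "(\<forall>\<phi>\<in>adj_dom D A. 2 * inner f \<phi> - inner (2 *\<^sub>R xt + adj D A \<phi>) (adj D A \<phi>) \<le> (norm eA)\<^sup>2)
     \<and> red_inv (adj_dom D A) (adj D A) (ran D A) eA \<in> adj_dom D A \<inter> ran D A
     \<and> adj D A (red_inv (adj_dom D A) (adj D A) (ran D A) eA) = eA
     \<and> (let \<phi> = red_inv (adj_dom D A) (adj D A) (ran D A) eA in
          2 * inner f \<phi> - inner (2 *\<^sub>R xt + adj D A \<phi>) (adj D A \<phi>) = (norm eA)\<^sup>2)"
proof -
  have lin: "lin_op D A" and dens: "densely_defined D" using dd by (auto simp: dd_closed_op_def)
  have RS: "subspace (ran (adj_dom D A) (adj D A))" "closed (ran (adj_dom D A) (adj D A))"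
    unfolding ran_adj_closed_range[OF dd R] by (rule orth_compl_subspace, rule orth_compl_closed)
  have functional: "2 * inner f \<phi> - inner (2 *\<^sub>R xt + adj D A \<phi>) (adj D A \<phi>)
      = 2 * inner (adj D A \<phi>) (x - xt) - inner (adj D A \<phi>) (adj D A \<phi>)"
    if "\<phi> \<in> adj_dom D A" for \<phi>
    using inner_adj[OF dens that x(1)] x(2) by (intro dual_functional_eq) (simp add: inner_commute)
  have "adj D A \<phi> \<in> ran (adj_dom D A) (adj D A)" if "\<phi> \<in> adj_dom D A" for \<phi>
    using that by (simp add: ran_def)
  then have le: "\<forall>\<phi>\<in>adj_dom D A. 2 * inner f \<phi> - inner (2 *\<^sub>R xt + adj D A \<phi>) (adj D A \<phi>) \<le> (norm eA)\<^sup>2"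
    using functional orth_proj_dual_le[OF RS] by (simp add: eA[symmetric])
  define \<phi> where "\<phi> = red_inv (adj_dom D A) (adj D A) (ran D A) eA"
  have \<phi>: "\<phi> \<in> adj_dom D A \<inter> ran D A \<and> adj D A \<phi> = eA"
    unfolding \<phi>_def eA[symmetric] using red_inv_ran_adj[OF dens lin R] orth_proj_in[OF RS] by blast
  have "2 * inner f \<phi> - inner (2 *\<^sub>R xt + adj D A \<phi>) (adj D A \<phi>) = (norm eA)\<^sup>2"
    using functional[of \<phi>] \<phi> orth_proj_dual_eq[OF RS, of "x - xt", unfolded eA] by simp
  with le \<phi> show ?thesis unfolding Let_def \<phi>_def by blast
qed

lemma dual_principle_subspace:
  fixes K :: "'a::{real_inner,complete_space} set" and xt :: 'a
  assumes K: "subspace K" "closed K" and k: "orth_proj K x = k"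
  defines "eK \<equiv> orth_proj K (x - xt)"
  shows "(\<forall>\<theta>\<in>K. inner (2 *\<^sub>R (k - xt) - \<theta>) \<theta> \<le> (norm eK)\<^sup>2)
    \<and> inner (2 *\<^sub>R (k - xt) - eK) eK = (norm eK)\<^sup>2"
proof -
  have functional: "inner (2 *\<^sub>R (k - xt) - \<theta>) \<theta> = 2 * inner \<theta> (x - xt) - inner \<theta> \<theta>" if "\<theta> \<in> K" for \<theta>
  proof -
    have "inner (x - k) \<theta> = 0" using orth_proj_orth[OF K that, of x] k by simp
    then have "inner k \<theta> = inner \<theta> x" by (simp add: inner_diff_right inner_commute)
    from dual_functional_eq[OF this, of xt] show ?thesis
      by (simp add: inner_diff_left inner_add_left)
  qed
  show ?thesis
    using functional orth_proj_dual_le[OF K] orth_proj_dual_eq[OF K] orth_proj_in[OF K] by (simp add: eK_def)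
qed

theorem theorem4p5:
  fixes D1 :: "'h1::{real_inner,complete_space} set" and A1 :: "'h1 \<Rightarrow> 'h2::{real_inner,complete_space}"
    and D2 :: "'h2 set" and A2 :: "'h2 \<Rightarrow> 'h3::{real_inner,complete_space}"
    and f :: 'h3 and g :: 'h1 and k x xt :: 'h2
  defines "K2 \<equiv> ker D2 A2 \<inter> ker (adj_dom D1 A1) (adj D1 A1)"
  defines "e \<equiv> x - xt"
  defines "eA1 \<equiv> orth_proj (ran D1 A1) e"
  defines "eA2s \<equiv> orth_proj (ran (adj_dom D2 A2) (adj D2 A2)) e"
  defines "eK2 \<equiv> orth_proj K2 e"
  assumes A1: "dd_closed_op D1 A1" and A2: "dd_closed_op D2 A2"
    and cplx: "ran D1 A1 \<subseteq> ker D2 A2"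
    and clR1: "closed (ran D1 A1)" and clR2: "closed (ran D2 A2)"
    and finK2: "fin_dim K2"
    and f: "f \<in> ran D2 A2" and g: "g \<in> ran (adj_dom D1 A1) (adj D1 A1)" and k: "k \<in> K2"
    and x: "x \<in> D2 \<inter> adj_dom D1 A1" and xf: "A2 x = f" and xg: "adj D1 A1 x = g"
    and xk: "orth_proj K2 x = k"
  shows
    "(e = eA1 + eK2 + eA2s \<and> eA1 \<in> ran D1 A1 \<and> eK2 \<in> K2
       \<and> eA2s \<in> ran (adj_dom D2 A2) (adj D2 A2)
       \<and> (norm e)\<^sup>2 = (norm eA1)\<^sup>2 + (norm eK2)\<^sup>2 + (norm eA2s)\<^sup>2)
  \<and>
    ((\<forall>\<phi>\<in>D1. 2 * inner g \<phi> - inner (2 *\<^sub>R xt + A1 \<phi>) (A1 \<phi>) \<le> (norm eA1)\<^sup>2)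
     \<and> red_inv D1 A1 (ran (adj_dom D1 A1) (adj D1 A1)) eA1
          \<in> D1 \<inter> ran (adj_dom D1 A1) (adj D1 A1)
     \<and> A1 (red_inv D1 A1 (ran (adj_dom D1 A1) (adj D1 A1)) eA1) = eA1
     \<and> (let \<phi> = red_inv D1 A1 (ran (adj_dom D1 A1) (adj D1 A1)) eA1 in
          2 * inner g \<phi> - inner (2 *\<^sub>R xt + A1 \<phi>) (A1 \<phi>) = (norm eA1)\<^sup>2))
  \<and>
    ((\<forall>\<phi>\<in>adj_dom D2 A2. 2 * inner f \<phi> - inner (2 *\<^sub>R xt + adj D2 A2 \<phi>) (adj D2 A2 \<phi>) \<le> (norm eA2s)\<^sup>2)
     \<and> red_inv (adj_dom D2 A2) (adj D2 A2) (ran D2 A2) eA2s \<in> adj_dom D2 A2 \<inter> ran D2 A2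
     \<and> adj D2 A2 (red_inv (adj_dom D2 A2) (adj D2 A2) (ran D2 A2) eA2s) = eA2s
     \<and> (let \<phi> = red_inv (adj_dom D2 A2) (adj D2 A2) (ran D2 A2) eA2s in
          2 * inner f \<phi> - inner (2 *\<^sub>R xt + adj D2 A2 \<phi>) (adj D2 A2 \<phi>) = (norm eA2s)\<^sup>2))
  \<and>
    ((\<forall>\<theta>\<in>K2. inner (2 *\<^sub>R (k - xt) - \<theta>) \<theta> \<le> (norm eK2)\<^sup>2)
     \<and> inner (2 *\<^sub>R (k - xt) - eK2) eK2 = (norm eK2)\<^sup>2)
  \<and>
    (\<forall>xp. xp \<in> orth_compl K2 \<and> xt = k + xp \<longrightarrow>
       eK2 = 0
       \<and> (\<forall>\<phi>\<in>D1. 2 * inner g \<phi> - inner (2 *\<^sub>R xp + A1 \<phi>) (A1 \<phi>) \<le> (norm eA1)\<^sup>2)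
       \<and> (let \<phi> = red_inv D1 A1 (ran (adj_dom D1 A1) (adj D1 A1)) eA1 in
            2 * inner g \<phi> - inner (2 *\<^sub>R xp + A1 \<phi>) (A1 \<phi>) = (norm eA1)\<^sup>2)
       \<and> (\<forall>\<phi>\<in>adj_dom D2 A2. 2 * inner f \<phi> - inner (2 *\<^sub>R xp + adj D2 A2 \<phi>) (adj D2 A2 \<phi>) \<le> (norm eA2s)\<^sup>2)
       \<and> (let \<phi> = red_inv (adj_dom D2 A2) (adj D2 A2) (ran D2 A2) eA2s in
            2 * inner f \<phi> - inner (2 *\<^sub>R xp + adj D2 A2 \<phi>) (adj D2 A2 \<phi>) = (norm eA2s)\<^sup>2))"
proof -
  have lin1: "lin_op D1 A1" and dens1: "densely_defined D1"
    and lin2: "lin_op D2 A2" and cl2: "closed_op D2 A2"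
    using A1 A2 by (auto simp: dd_closed_op_def)
  have R1: "subspace (ran D1 A1)" "closed (ran D1 A1)" using subspace_ran[OF lin1] clR1 .
  have N2: "subspace (ker D2 A2)" "closed (ker D2 A2)" using subspace_ker[OF lin2] closed_ker[OF cl2] .
  have K2_eq: "K2 = ker D2 A2 \<inter> orth_compl (ran D1 A1)"
    unfolding K2_def ker_adj_eq_orth_compl_ran[OF dens1] ..
  have R2s_eq: "ran (adj_dom D2 A2) (adj D2 A2) = orth_compl (ker D2 A2)"
    by (rule ran_adj_closed_range[OF A2 clR2])
  \<comment> \<open>K2 is closed as the intersection of closed subspaces.\<close>
  note K2 = closed_subspace_inter_orth_compl[OF N2, of "ran D1 A1", folded K2_eq]
  have x1: "x \<in> adj_dom D1 A1" and x2: "x \<in> D2" using x by auto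
  have eA: "orth_proj (ran D1 A1) (x - xt) = eA1"
    "orth_proj (ran (adj_dom D2 A2) (adj D2 A2)) (x - xt) = eA2s" by (simp_all add: eA1_def eA2s_def e_def)
  note decomp = orth_proj_nested_pythagoras[OF R1 N2 cplx, of e, folded K2_eq R2s_eq,
    folded eA1_def eK2_def eA2s_def]
  note ii = dual_principle_ran[OF A1 clR1 x1 xg eA(1)]
  note iii = dual_principle_ran_adj[OF A2 clR2 x2 xf eA(2)]
  note iv = dual_principle_subspace[OF K2 xk, of xt, folded e_def, folded eK2_def]
  show ?thesis (is "?i \<and> _ \<and> _ \<and> _ \<and> (\<forall>xp. ?shifted xp \<longrightarrow> ?claim xp)")
  proof (intro conjI[OF _ conjI[OF ii conjI[OF iii conjI[OF iv]]]] allI impI)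
    show ?i using decomp by simp
  next
    fix xp assume "?shifted xp"
    then have shift: "eK2 = 0" "orth_proj (ran D1 A1) (x - xp) = eA1"
      "orth_proj (ran (adj_dom D2 A2) (adj D2 A2)) (x - xp) = eA2s"
      using orth_proj_nested_shift[OF R1 N2, of x k xp, folded K2_eq R2s_eq] xk eA
      by (simp_all add: eK2_def e_def)
    then show "?claim xp"
      using dual_principle_ran[OF A1 clR1 x1 xg shift(2)] dual_principle_ran_adj[OF A2 clR2 x2 xf shift(3)]
      by simp
  qed
qed

end
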